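(* Let $G$ be a locally compact abelian group with Haar measure $m$, and let $\widehat{G}$ be its dual group with Haar measure $\widehat{m}$. Let $1\leq p\leq 2\leq q$. Let $S\subset G$ and $\Sigma\subset\widehat{G}$ be two sets of finite measure, and assume that $\Sigma$ satisfies a $(p,q)$-restriction estimate with constant $\rho_{p,q}(\Sigma)$, i.e. $$\left(\int_\Sigma|\widehat{f}(\xi)|^q\,\mathrm{d}\widehat{m}(\xi)\right)^{1/q}\leq \rho_{p,q}(\Sigma)\left(\int_G|f(x)|^p\,\mathrm{d}m(x)\right)^{1/p}\quad\text{for all } f\in\mathcal{S}(G)$$ (with supremum norms replacing the integrals if $q=\infty$). Assume that $$\rho_{p,q}(\Sigma)\,m(S)^{\frac1p-\frac12}\,\widehat{m}(\Sigma)^{\frac12-\frac1q}<1.$$ Then $(S,\Sigma)$ is a strong annihilating pair; more precisely, for every $f\in L^2(G)$, $$\|f\|_{L^2(G)}\leq A_{ann}(S,\Sigma)\bigl(\|f\|_{L^2(G\setminus S)}+\|\widehat{f}\|_{L^2(\widehat{G}\setminus\Sigma)}\bigr),\qquad A_{ann}(S,\Sigma)=\frac{1}{1-\rho_{p,q}(\Sigma)\,m(S)^{\frac1p-\frac12}\,\widehat{m}(\Sigma)^{\frac12-\frac1q}}.$$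
   Context: The Fourier transform of $f\in L^1(G)$ is $\widehat{f}(\chi)=c_G\int_G f(x)\overline{\chi(x)}\,\mathrm{d}m(x)$ for $\chi\in\widehat{G}$ (characters are continuous homomorphisms $G\to\{|z|=1\}$), where the normalization constant $c_G>0$ is chosen so that the Fourier transform extends to a unitary map $L^2(G)\to L^2(\widehat{G})$. $\mathcal{S}(G)\subset L^1(G)$ denotes a fixed class of functions that is dense in every $L^p(G)$, $1\leq p<\infty$, and such that $\widehat{f}$ is continuous for $f\in\mathcal{S}(G)$; the restriction estimate means the Fourier transform extends continuously $L^p(G)\to L^q(\Sigma)$ with the stated bound. A pair $(S,\Sigma)$ is a strong annihilating pair if there is a constant $C$ with $\|f\|_{L^2(G)}\leq C(\|f\|_{L^2(G\setminus S)}+\|\widehat f\|_{L^2(\widehat G\setminus\Sigma)})$ for all $f\in L^2(G)$. *)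

theory Defs
  imports "HOL-Analysis.Analysis" "HOL-Probability.Probability"
begin

definition lca_group :: "'g::{topological_group_add, ab_group_add, t2_space} itself \<Rightarrow> bool" where
  "lca_group _ \<longleftrightarrow> locally_compact_space (euclidean :: 'g topology)"

definition borel_sets_of :: "'a topology \<Rightarrow> 'a set set" where
  "borel_sets_of X = sigma_sets (topspace X) {U. openin X U}"

definition haar_measure :: "'a topology \<Rightarrow> ('a \<Rightarrow> 'a \<Rightarrow> 'a) \<Rightarrow> 'a measure \<Rightarrow> bool" where
  "haar_measure X gop M \<longleftrightarrow>
     space M = topspace X \<and> sets M = borel_sets_of X \<and>
     (\<forall>K. compactin X K \<longrightarrow> emeasure M K < \<infinity>) \<and>
     (\<forall>U. openin X U \<and> U \<noteq> {} \<longrightarrow> emeasure M U > 0) \<and>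
     (\<forall>A\<in>sets M. emeasure M A = (INF U\<in>{U. openin X U \<and> A \<subseteq> U}. emeasure M U)) \<and>
     (\<forall>U. openin X U \<longrightarrow> emeasure M U = (SUP K\<in>{K. compactin X K \<and> K \<subseteq> U}. emeasure M K)) \<and>
     (\<forall>a\<in>topspace X. \<forall>A\<in>sets M. emeasure M (gop a ` A) = emeasure M A)"

definition is_character :: "('g::{topological_group_add, ab_group_add} \<Rightarrow> complex) \<Rightarrow> bool" where
  "is_character ch \<longleftrightarrow> continuous_on UNIV ch \<and> (\<forall>x y. ch (x + y) = ch x * ch y) \<and> (\<forall>x. cmod (ch x) = 1)"

definition dual_group :: "('g::{topological_group_add, ab_group_add} \<Rightarrow> complex) set" where
  "dual_group = {ch. is_character ch}"

text \<open>The dual group carries the compact-open topology (subbasis: characters mapping a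
  compact set K into an open set U).\<close>
definition dual_top :: "('g::{topological_group_add, ab_group_add} \<Rightarrow> complex) topology" where
  "dual_top = topology_generated_by
     {{ch\<in>dual_group. ch ` K \<subseteq> U} | K U. compact K \<and> open U}"

definition dual_mult :: "('g \<Rightarrow> complex) \<Rightarrow> ('g \<Rightarrow> complex) \<Rightarrow> ('g \<Rightarrow> complex)" where
  "dual_mult \<eta> ch = (\<lambda>x. \<eta> x * ch x)"

definition Lp :: "'a measure \<Rightarrow> real \<Rightarrow> ('a \<Rightarrow> complex) \<Rightarrow> bool" where
  "Lp M p f \<longleftrightarrow> f \<in> borel_measurable M \<and> integrable M (\<lambda>x. cmod (f x) powr p)"

definition Lp_norm :: "'a measure \<Rightarrow> real \<Rightarrow> ('a \<Rightarrow> complex) \<Rightarrow> real" where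
  "Lp_norm M p f = (\<integral>x. cmod (f x) powr p \<partial>M) powr (1 / p)"

text \<open>The norm of f in L^q(Sigma), q in [1,\<infinity>] (as an extended real, since it may be infinite);
  for q = \<infinity> it is the essential supremum over Sigma.\<close>
definition Lq_norm_on :: "'a measure \<Rightarrow> ereal \<Rightarrow> 'a set \<Rightarrow> ('a \<Rightarrow> complex) \<Rightarrow> ereal" where
  "Lq_norm_on M q A f =
     (if q = \<infinity> then esssup (restrict_space M A) (\<lambda>x. ereal (cmod (f x)))
      else (let I = (\<integral>\<^sup>+ x. indicator A x * ennreal (cmod (f x) powr real_of_ereal q) \<partial>M) in
            if I = \<infinity> then \<infinity> else ereal (enn2real I powr (1 / real_of_ereal q))))"

text \<open>1/q for q in [1,\<infinity>], with 1/\<infinity> = 0.\<close>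
definition inv_exp :: "ereal \<Rightarrow> real" where
  "inv_exp q = (if q = \<infinity> then 0 else 1 / real_of_ereal q)"

text \<open>Real power with the convention x^0 = 1 (also for x = 0).\<close>
definition rpow :: "real \<Rightarrow> real \<Rightarrow> real" where
  "rpow x a = (if a = 0 then 1 else x powr a)"

definition fourier :: "real \<Rightarrow> 'g measure \<Rightarrow> ('g \<Rightarrow> complex) \<Rightarrow> ('g \<Rightarrow> complex) \<Rightarrow> complex" where
  "fourier c M f ch = complex_of_real c * (\<integral>x. f x * cnj (ch x) \<partial>M)"

text \<open>g is the L^2 Fourier transform of f in L^2(G): the limit in L^2(dual) of the Fourier
  transforms of functions in L^1 \<inter> L^2 converging to f in L^2.\<close>
definition fourier_L2 :: "real \<Rightarrow> 'g measure \<Rightarrow> ('g \<Rightarrow> complex) measure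
    \<Rightarrow> ('g \<Rightarrow> complex) \<Rightarrow> (('g \<Rightarrow> complex) \<Rightarrow> complex) \<Rightarrow> bool" where
  "fourier_L2 c M Mh f g \<longleftrightarrow> Lp M 2 f \<and> Lp Mh 2 g \<and>
     (\<exists>F. (\<forall>n. integrable M (F n) \<and> Lp M 2 (F n) \<and> fourier c M (F n) \<in> borel_measurable Mh) \<and>
          ((\<lambda>n. \<integral>\<^sup>+ x. ennreal ((cmod (F n x - f x))\<^sup>2) \<partial>M) \<longlonglongrightarrow> 0) \<and>
          ((\<lambda>n. \<integral>\<^sup>+ \<xi>. ennreal ((cmod (fourier c M (F n) \<xi> - g \<xi>))\<^sup>2) \<partial>Mh) \<longlonglongrightarrow> 0))"

text \<open>The normalization constant c > 0 makes the Fourier transform extend to a unitary map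
  L^2(G) \<rightarrow> L^2(dual): isometric on L^1 \<inter> L^2 and the extension is onto.\<close>
definition fourier_unitary :: "real \<Rightarrow> 'g measure \<Rightarrow> ('g \<Rightarrow> complex) measure \<Rightarrow> bool" where
  "fourier_unitary c M Mh \<longleftrightarrow> c > 0 \<and>
     (\<forall>f. integrable M f \<and> Lp M 2 f \<longrightarrow>
        fourier c M f \<in> borel_measurable Mh \<and>
        (\<integral>\<^sup>+ \<xi>. ennreal ((cmod (fourier c M f \<xi>))\<^sup>2) \<partial>Mh) = (\<integral>\<^sup>+ x. ennreal ((cmod (f x))\<^sup>2) \<partial>M)) \<and>
     (\<forall>g. Lp Mh 2 g \<longrightarrow> (\<exists>f. fourier_L2 c M Mh f g))"

text \<open>The test class S(G): a subset of L^1(G), contained and dense in every L^p(G),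
  1 \<le> p < \<infinity>, whose Fourier transforms are continuous on the dual group.\<close>
definition test_class :: "real \<Rightarrow> 'g::{topological_group_add, ab_group_add} measure
    \<Rightarrow> ('g \<Rightarrow> complex) set \<Rightarrow> bool" where
  "test_class c M SG \<longleftrightarrow>
     (\<forall>f\<in>SG. integrable M f \<and> continuous_map dual_top euclidean (fourier c M f)) \<and>
     (\<forall>p::real. 1 \<le> p \<longrightarrow> (\<forall>f\<in>SG. Lp M p f) \<and>
        (\<forall>f. Lp M p f \<longrightarrow> (\<forall>e>0. \<exists>\<phi>\<in>SG. Lp_norm M p (\<lambda>x. f x - \<phi> x) < e)))"

definition restriction_estimate :: "real \<Rightarrow> 'g measure \<Rightarrow> ('g \<Rightarrow> complex) measure
    \<Rightarrow> ('g \<Rightarrow> complex) set \<Rightarrow> real \<Rightarrow> ereal \<Rightarrow> ('g \<Rightarrow> complex) set \<Rightarrow> real \<Rightarrow> bool" where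
  "restriction_estimate c M Mh SG p q \<Sigma> \<rho> \<longleftrightarrow>
     (\<forall>f\<in>SG. Lq_norm_on Mh q \<Sigma> (fourier c M f) \<le> ereal (\<rho> * Lp_norm M p f))"

end

theory Submission
  imports Defs
begin

(* Let h = 1_S f, let g be the Fourier transform of f and write ^ for the transform of a
   function in L^1 and L^2. By Plancherel ||f|| = ||g||, and splitting the dual side along Sigma,
     ||g|| <= ||1_(Sigma^c) g|| + ||1_Sigma h^|| + ||g - h^||,  where ||g - h^|| = ||1_(S^c) f||.
   Hoelder on Sigma turns the (p,q)-restriction estimate into
     ||1_Sigma h^||_2 <= rho mh(Sigma)^(1/2-1/q) ||h||_p,
   and Hoelder on S gives ||h||_p <= m(S)^(1/p-1/2) ||f||_2; the product of the constants is
   below 1, so this term is absorbed by the left-hand side.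
   The restriction estimate is only assumed on the test class; it passes to h by density,
   because ||1_Sigma psi^||_2 is small whenever int |psi|^p is small: the values |psi| > 1
   carry little L^1 mass, so their transform is uniformly small, and the values |psi| <= 1
   carry little L^2 mass. *)

section \<open>Elementary inequalities\<close>

lemma powr_add_le_weighted:
  fixes x y p t :: real
  assumes p: "1 \<le> p" and t: "0 < t" "t < 1" and xy: "0 \<le> x" "0 \<le> y"
  shows "(x + y) powr p \<le> (1 - t) powr (1 - p) * x powr p + t powr (1 - p) * y powr p"
proof (cases "x = 0 \<or> y = 0")
  case True
  have "1 \<le> (1 - t) powr (1 - p)" "1 \<le> t powr (1 - p)"
    using p t powr_mono'[of "1 - p" 0 "1 - t"] powr_mono'[of "1 - p" 0 t] by simp_all
  with True xy show ?thesis
    by (auto simp: mult_le_cancel_right1)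
next
  case False
  with xy have "0 < x" "0 < y"
    by auto
  have "((1 - t) * (x / (1 - t)) + t * (y / t)) powr p
          \<le> (1 - t) * (x / (1 - t)) powr p + t * (y / t) powr p"
    using conjunct2[OF powr_convex[OF p, unfolded convex_on_def], rule_format,
        of "x / (1 - t)" "y / t" "1 - t" t] t \<open>0 < x\<close> \<open>0 < y\<close>
    by simp
  also have "(1 - t) * (x / (1 - t)) powr p = (1 - t) powr (1 - p) * x powr p"
    using t \<open>0 < x\<close> by (simp add: powr_divide powr_diff)
  also have "t * (y / t) powr p = t powr (1 - p) * y powr p"
    using t \<open>0 < y\<close> by (simp add: powr_divide powr_diff)
  finally show ?thesis
    using t by simp
qed

lemma norm_powr_add_le_weighted:
  fixes x y :: "'a::real_normed_vector"
  assumes p: "1 \<le> p" and t: "0 < t" "t < 1"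
  shows "norm (x + y) powr p \<le> (1 - t) powr (1 - p) * norm x powr p + t powr (1 - p) * norm y powr p"
proof -
  have "norm (x + y) powr p \<le> (norm x + norm y) powr p"
    using p by (intro powr_mono2 norm_triangle_ineq) auto
  also have "\<dots> \<le> (1 - t) powr (1 - p) * norm x powr p + t powr (1 - p) * norm y powr p"
    using p t by (intro powr_add_le_weighted) auto
  finally show ?thesis .
qed

text \<open>The optimal weight is \<open>t = b / (a + b)\<close> with \<open>a = A powr (1/p)\<close>, \<open>b = B powr (1/p)\<close>.\<close>

lemma powr_inverse_le_of_weighted_bound:
  fixes I A B p :: real
  assumes p: "1 \<le> p" and I: "0 \<le> I" and AB: "0 < A" "0 < B"
    and bound: "\<And>t. 0 < t \<Longrightarrow> t < 1 \<Longrightarrow> I \<le> (1 - t) powr (1 - p) * A + t powr (1 - p) * B"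
  shows "I powr (1 / p) \<le> A powr (1 / p) + B powr (1 / p)"
proof -
  define a b where "a = A powr (1 / p)" and "b = B powr (1 / p)"
  have ab: "0 < a" "0 < b" and A: "A = a powr p" and B: "B = b powr p"
    using AB p by (auto simp: a_def b_def powr_powr)
  have weight: "(x / (a + b)) powr (1 - p) * x powr p = x * (a + b) powr (p - 1)" if "0 < x" for x
    using that ab by (simp add: powr_divide powr_diff powr_add[symmetric] divide_simps)
  have "I \<le> (a / (a + b)) powr (1 - p) * A + (b / (a + b)) powr (1 - p) * B"
    using bound[of "b / (a + b)"] ab by (simp add: divide_simps)
  also have "\<dots> = (a + b) * (a + b) powr (p - 1)"
    unfolding A B weight[OF ab(1)] weight[OF ab(2)] by (simp add: algebra_simps)
  also have "\<dots> = (a + b) powr p"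
    using ab by (simp add: powr_diff)
  finally have "I powr (1 / p) \<le> ((a + b) powr p) powr (1 / p)"
    using p I by (intro powr_mono2) auto
  then show ?thesis
    using ab p by (simp add: powr_powr a_def b_def)
qed

lemma powr_le_tangent_line:
  fixes v a r :: real
  assumes r: "0 < r" "r \<le> 1" and v: "0 \<le> v" and a: "0 < a"
  shows "v powr r \<le> r * a powr (r - 1) * v + (1 - r) * a powr r"
proof (cases "v = 0")
  case True
  then show ?thesis
    using r a by simp
next
  case False
  have "(v / a) powr r * 1 powr (1 - r) \<le> r * (v / a) + (1 - r) * 1"
    using r v a False by (intro Youngs_inequality_0) auto
  then have "(v / a) powr r * a powr r \<le> (r * (v / a) + (1 - r)) * a powr r"
    by (intro mult_right_mono) auto
  then show ?thesis
    using v a by (simp add: powr_divide powr_diff algebra_simps)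
qed

lemma mult_le_add_abs_mult:
  fixes k x y e :: real
  assumes "\<bar>x - y\<bar> \<le> e"
  shows "k * x \<le> k * y + \<bar>k\<bar> * e"
proof -
  have "k * (x - y) \<le> \<bar>k\<bar> * \<bar>x - y\<bar>"
    by (metis abs_ge_self abs_mult)
  also have "\<dots> \<le> \<bar>k\<bar> * e"
    using assms by (intro mult_left_mono) auto
  finally show ?thesis
    by (simp add: algebra_simps)
qed

lemma power2_powr: "0 \<le> t \<Longrightarrow> (t\<^sup>2) powr (a / 2) = t powr (a :: real)"
  using powr_powr[of t 2 "a / 2"] by simp

lemma rpow_nonneg: "0 \<le> x \<Longrightarrow> 0 \<le> rpow x a"
  by (simp add: rpow_def)

lemma rpow_powr: "0 \<le> x \<Longrightarrow> 0 < p \<Longrightarrow> rpow x a powr (1 / p) = rpow x (a / p)"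
  by (auto simp: rpow_def powr_powr)

section \<open>\<open>L\<^sup>p\<close> norms and Minkowski's inequality\<close>

lemma Lp_norm_nonneg: "0 \<le> Lp_norm M p u"
  by (simp add: Lp_norm_def)

lemma Lp_2_iff: "Lp M 2 u \<longleftrightarrow> u \<in> borel_measurable M \<and> integrable M (\<lambda>x. (cmod (u x))\<^sup>2)"
  by (simp add: Lp_def)

lemma Lp_norm_2: "Lp_norm M 2 u = sqrt (\<integral>x. (cmod (u x))\<^sup>2 \<partial>M)"
  by (simp add: Lp_norm_def powr_half_sqrt)

lemma Lp_norm_2_indicator:
  "Lp_norm M 2 (\<lambda>x. indicator A x * u x) = sqrt (\<integral>x. indicator A x * (cmod (u x))\<^sup>2 \<partial>M)"
  unfolding Lp_norm_2
  by (intro arg_cong[where f = sqrt] Bochner_Integration.integral_cong) (auto split: split_indicator)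

lemma Lp_1_integrable: "Lp M 1 u \<Longrightarrow> integrable M u"
  by (auto simp: Lp_def intro: integrable_norm_cancel)

lemma Lp_norm_cong:
  "(\<And>x. x \<in> space M \<Longrightarrow> cmod (u x) = cmod (v x)) \<Longrightarrow> Lp_norm M p u = Lp_norm M p v"
  unfolding Lp_norm_def by (simp cong: Bochner_Integration.integral_cong)

lemma Lp_norm_minus_commute: "Lp_norm M p (\<lambda>x. u x - v x) = Lp_norm M p (\<lambda>x. v x - u x)"
  by (intro Lp_norm_cong norm_minus_commute)

lemma Lp_uminus: "Lp M p (\<lambda>x. - u x) \<longleftrightarrow> Lp M p u"
  by (simp add: Lp_def)

lemma Lp_norm_uminus: "Lp_norm M p (\<lambda>x. - u x) = Lp_norm M p u"
  by (simp add: Lp_norm_def)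

lemma Lp_norm_eq_0_AE:
  assumes "0 < p" "Lp M p u" "Lp_norm M p u = 0"
  shows "AE x in M. u x = 0"
proof -
  have "(\<integral>x. cmod (u x) powr p \<partial>M) = 0"
    using assms(3) by (simp add: Lp_norm_def)
  then have "AE x in M. cmod (u x) powr p = 0"
    using assms(2) by (simp add: Lp_def integral_nonneg_eq_0_iff_AE)
  then show ?thesis
    by eventually_elim simp
qed

lemma Lp_norm_add_null:
  assumes "0 < p" "Lp M p u" "Lp_norm M p u = 0" and [measurable]: "v \<in> borel_measurable M"
  shows "Lp_norm M p (\<lambda>x. u x + v x) = Lp_norm M p v"
proof -
  have [measurable]: "u \<in> borel_measurable M"
    using assms(2) by (simp add: Lp_def)
  have "AE x in M. u x = 0"
    using assms(1-3) by (rule Lp_norm_eq_0_AE)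
  then show ?thesis
    unfolding Lp_norm_def by (intro arg_cong[where f = "\<lambda>t. t powr (1 / p)"] integral_cong_AE) auto
qed

lemma integral_powr_le_of_Lp_norm_le:
  assumes p: "1 \<le> p" and u: "Lp_norm M p u \<le> e" and e: "e \<le> 1"
  shows "(\<integral>x. cmod (u x) powr p \<partial>M) \<le> e"
proof -
  have "0 \<le> e"
    using u Lp_norm_nonneg[of M p u] by simp
  have "(\<integral>x. cmod (u x) powr p \<partial>M) = Lp_norm M p u powr p"
    using p by (simp add: Lp_norm_def powr_powr integral_nonneg)
  also have "\<dots> \<le> e powr p"
    using p u by (intro powr_mono2) (auto simp: Lp_norm_nonneg)
  also have "\<dots> \<le> e"
    using p e \<open>0 \<le> e\<close> powr_mono'[of 1 p e] by simp
  finally show ?thesis .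
qed

lemma Lp_mono:
  assumes p: "0 \<le> p" and [measurable]: "u \<in> borel_measurable M" and v: "Lp M p v"
    and le: "\<And>x. x \<in> space M \<Longrightarrow> cmod (u x) \<le> cmod (v x)"
  shows "Lp M p u" "Lp_norm M p u \<le> Lp_norm M p v"
proof -
  have iv: "integrable M (\<lambda>x. cmod (v x) powr p)"
    using v by (simp add: Lp_def)
  have ptw: "x \<in> space M \<Longrightarrow> cmod (u x) powr p \<le> cmod (v x) powr p" for x
    using p le by (intro powr_mono2) auto
  have iu: "integrable M (\<lambda>x. cmod (u x) powr p)"
    by (rule Bochner_Integration.integrable_bound[OF iv]) (auto intro: ptw)
  then show "Lp M p u"
    by (simp add: Lp_def)
  show "Lp_norm M p u \<le> Lp_norm M p v"
    unfolding Lp_norm_def using p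
    by (intro powr_mono2 integral_mono[OF iu iv ptw] integral_nonneg) auto
qed

lemma Lp_indicator:
  "0 \<le> p \<Longrightarrow> A \<in> sets M \<Longrightarrow> Lp M p u \<Longrightarrow> Lp M p (\<lambda>x. indicator A x * u x)"
  by (rule Lp_mono(1)) (auto simp: Lp_def norm_mult split: split_indicator)

lemma Lp_norm_indicator_le:
  "0 \<le> p \<Longrightarrow> A \<in> sets M \<Longrightarrow> Lp M p u \<Longrightarrow> Lp_norm M p (\<lambda>x. indicator A x * u x) \<le> Lp_norm M p u"
  by (rule Lp_mono(2)) (auto simp: Lp_def norm_mult split: split_indicator)

lemma Lp_add:
  assumes p: "1 \<le> p" and u: "Lp M p u" and v: "Lp M p v"
  shows "Lp M p (\<lambda>x. u x + v x)"
proof -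
  have [measurable]: "u \<in> borel_measurable M" "v \<in> borel_measurable M"
    using u v by (simp_all add: Lp_def)
  define w where "w = (\<lambda>x. (1/2) powr (1 - p) * cmod (u x) powr p + (1/2) powr (1 - p) * cmod (v x) powr p)"
  have w: "integrable M w"
    using u v by (simp add: Lp_def w_def)
  have "cmod (u x + v x) powr p \<le> w x" for x
    using norm_powr_add_le_weighted[OF p, of "1/2"] by (simp add: w_def)
  then have "AE x in M. norm (cmod (u x + v x) powr p) \<le> norm (w x)"
    by (intro AE_I2) (simp add: order.trans[OF _ abs_ge_self])
  then have "integrable M (\<lambda>x. cmod (u x + v x) powr p)"
    by (intro Bochner_Integration.integrable_bound[OF w]) measurable
  then show ?thesis
    by (simp add: Lp_def)
qed

theorem Lp_norm_triangle:
  assumes p: "1 \<le> p" and u: "Lp M p u" and v: "Lp M p v"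
  shows "Lp_norm M p (\<lambda>x. u x + v x) \<le> Lp_norm M p u + Lp_norm M p v"
proof -
  define A B where "A = (\<integral>x. cmod (u x) powr p \<partial>M)" and "B = (\<integral>x. cmod (v x) powr p \<partial>M)"
  have iu: "integrable M (\<lambda>x. cmod (u x) powr p)" and iv: "integrable M (\<lambda>x. cmod (v x) powr p)"
    and iuv: "integrable M (\<lambda>x. cmod (u x + v x) powr p)"
    using u v Lp_add[OF p u v] by (simp_all add: Lp_def)
  have "0 \<le> A" "0 \<le> B"
    unfolding A_def B_def by (simp_all add: integral_nonneg)
  then consider "A = 0" | "B = 0" | "0 < A" "0 < B"
    by fastforce
  then show ?thesis
  proof cases
    case 1
    then have "Lp_norm M p u = 0"
      by (simp add: Lp_norm_def A_def)
    with Lp_norm_add_null[OF _ u this, of v] p v show ?thesis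
      by (simp add: Lp_def)
  next
    case 2
    then have "Lp_norm M p v = 0"
      by (simp add: Lp_norm_def B_def)
    with Lp_norm_add_null[OF _ v this, of u] p u show ?thesis
      by (simp add: Lp_def add.commute)
  next
    case 3
    have "(\<integral>x. cmod (u x + v x) powr p \<partial>M) \<le> (1 - t) powr (1 - p) * A + t powr (1 - p) * B"
      if "0 < t" "t < 1" for t
    proof -
      have "(\<integral>x. cmod (u x + v x) powr p \<partial>M)
              \<le> (\<integral>x. (1 - t) powr (1 - p) * cmod (u x) powr p + t powr (1 - p) * cmod (v x) powr p \<partial>M)"
        using iu iv by (intro integral_mono[OF iuv] norm_powr_add_le_weighted[OF p that]) auto
      then show ?thesis
        using iu iv by (simp add: A_def B_def)
    qed
    then have "(\<integral>x. cmod (u x + v x) powr p \<partial>M) powr (1 / p) \<le> A powr (1 / p) + B powr (1 / p)"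
      by (intro powr_inverse_le_of_weighted_bound[OF p _ 3]) (simp_all add: integral_nonneg)
    then show ?thesis
      unfolding Lp_norm_def A_def B_def .
  qed
qed

lemma Lp_diff: "1 \<le> p \<Longrightarrow> Lp M p u \<Longrightarrow> Lp M p v \<Longrightarrow> Lp M p (\<lambda>x. u x - v x)"
  using Lp_add[of p M u "\<lambda>x. - v x"] by (simp add: Lp_uminus)

lemma Lp_norm_diff_le:
  "1 \<le> p \<Longrightarrow> Lp M p u \<Longrightarrow> Lp M p v \<Longrightarrow> Lp_norm M p (\<lambda>x. u x - v x) \<le> Lp_norm M p u + Lp_norm M p v"
  using Lp_norm_triangle[of p M u "\<lambda>x. - v x"] by (simp add: Lp_uminus Lp_norm_uminus)

lemma Lp_norm_diff_triangle:
  assumes "1 \<le> p" "Lp M p u" "Lp M p v" "Lp M p w"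
  shows "Lp_norm M p (\<lambda>x. u x - w x) \<le> Lp_norm M p (\<lambda>x. u x - v x) + Lp_norm M p (\<lambda>x. v x - w x)"
  using Lp_norm_triangle[OF assms(1) Lp_diff[OF assms(1,2,3)] Lp_diff[OF assms(1,3,4)]] by simp

lemma Lp_norm_reverse_triangle:
  assumes "1 \<le> p" "Lp M p u" "Lp M p v"
  shows "\<bar>Lp_norm M p u - Lp_norm M p v\<bar> \<le> Lp_norm M p (\<lambda>x. u x - v x)"
  using Lp_norm_diff_triangle[OF assms(1,2,3), of "\<lambda>_. 0"] Lp_norm_diff_triangle[OF assms(1,3,2), of "\<lambda>_. 0"]
    assms Lp_norm_minus_commute[of M p u v] by (auto simp: Lp_def)

lemma Lp_norm_le_split:
  assumes p: "1 \<le> p" and [measurable]: "A \<in> sets M" and u: "Lp M p u" and v: "Lp M p v"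
  shows "Lp_norm M p u \<le> Lp_norm M p (\<lambda>x. indicator (space M - A) x * u x)
           + Lp_norm M p (\<lambda>x. indicator A x * v x) + Lp_norm M p (\<lambda>x. u x - v x)"
proof -
  have uv: "Lp M p (\<lambda>x. u x - v x)"
    using Lp_diff[OF p u v] .
  have Lp_ind: "Lp M p (\<lambda>x. indicator B x * w x)" if "B \<in> sets M" "Lp M p w" for B w
    using Lp_indicator[OF _ that] p by simp
  note L1 = Lp_ind[OF _ u, of "space M - A"] and L2 = Lp_ind[OF _ v, of A] and L3 = Lp_ind[OF _ uv, of A]
  have "Lp_norm M p u = Lp_norm M p (\<lambda>x. indicator (space M - A) x * u x
          + (indicator A x * v x + indicator A x * (u x - v x)))"
    by (intro Lp_norm_cong) (simp split: split_indicator)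
  also have "\<dots> \<le> Lp_norm M p (\<lambda>x. indicator (space M - A) x * u x)
          + Lp_norm M p (\<lambda>x. indicator A x * v x + indicator A x * (u x - v x))"
    using L1 L2 L3 by (intro Lp_norm_triangle[OF p] Lp_add[OF p]) auto
  also have "Lp_norm M p (\<lambda>x. indicator A x * v x + indicator A x * (u x - v x))
      \<le> Lp_norm M p (\<lambda>x. indicator A x * v x) + Lp_norm M p (\<lambda>x. indicator A x * (u x - v x))"
    using L2 L3 by (intro Lp_norm_triangle[OF p]) auto
  also have "Lp_norm M p (\<lambda>x. indicator A x * (u x - v x)) \<le> Lp_norm M p (\<lambda>x. u x - v x)"
    using p uv by (intro Lp_norm_indicator_le) auto
  finally show ?thesis
    by simp
qed

lemma nn_integral_norm_power2:
  "Lp M 2 u \<Longrightarrow> (\<integral>\<^sup>+ x. ennreal ((cmod (u x))\<^sup>2) \<partial>M) = ennreal ((Lp_norm M 2 u)\<^sup>2)"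
  by (simp add: Lp_2_iff Lp_norm_2 nn_integral_eq_integral integral_nonneg)

lemma Lp_norm_2_tendsto_0:
  assumes "\<And>n. Lp M 2 (F n)" and "(\<lambda>n. \<integral>\<^sup>+ x. ennreal ((cmod (F n x))\<^sup>2) \<partial>M) \<longlonglongrightarrow> 0"
  shows "(\<lambda>n. Lp_norm M 2 (F n)) \<longlonglongrightarrow> 0"
proof -
  have "(\<lambda>n. ennreal ((Lp_norm M 2 (F n))\<^sup>2)) \<longlonglongrightarrow> ennreal 0"
    using assms by (simp add: nn_integral_norm_power2)
  then have "(\<lambda>n. (Lp_norm M 2 (F n))\<^sup>2) \<longlonglongrightarrow> 0"
    by (subst (asm) tendsto_ennreal_iff) auto
  from tendsto_real_sqrt[OF this] show ?thesis
    by (simp add: Lp_norm_nonneg)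
qed

lemma Lp_norm_diff_tendsto:
  assumes p: "1 \<le> p" and Lp: "Lp M p f" "Lp M p u" "\<And>n. Lp M p (F n)"
    and lim: "(\<lambda>n. Lp_norm M p (\<lambda>x. F n x - f x)) \<longlonglongrightarrow> 0"
  shows "(\<lambda>n. Lp_norm M p (\<lambda>x. F n x - u x)) \<longlonglongrightarrow> Lp_norm M p (\<lambda>x. f x - u x)"
proof -
  have "\<bar>Lp_norm M p (\<lambda>x. F n x - u x) - Lp_norm M p (\<lambda>x. f x - u x)\<bar> \<le> Lp_norm M p (\<lambda>x. F n x - f x)" for n
    using Lp_norm_reverse_triangle[OF p Lp_diff[OF p Lp(3,2)] Lp_diff[OF p Lp(1,2)]] by simp
  then have "(\<lambda>n. Lp_norm M p (\<lambda>x. F n x - u x) - Lp_norm M p (\<lambda>x. f x - u x)) \<longlonglongrightarrow> 0"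
    by (intro Lim_null_comparison[OF _ lim]) simp
  then show ?thesis
    by (simp add: LIM_zero_iff)
qed

lemma test_class_Lp_norm_eq_0:
  assumes SG: "test_class c M SG" and p: "1 \<le> p" and null: "\<And>\<phi>. \<phi> \<in> SG \<Longrightarrow> Lp_norm M p \<phi> = 0"
    and r: "1 \<le> r" and f: "Lp M r f"
  shows "Lp_norm M r f = 0"
proof -
  have "Lp_norm M r f \<le> 0 + e" if "0 < e" for e
  proof -
    obtain \<phi> where \<phi>: "\<phi> \<in> SG" "Lp_norm M r (\<lambda>x. f x - \<phi> x) < e"
      using SG f r \<open>0 < e\<close> unfolding test_class_def by blast
    have "AE x in M. \<phi> x = 0"
      using SG \<phi>(1) p null by (intro Lp_norm_eq_0_AE) (auto simp: test_class_def)
    then have "Lp_norm M r (\<lambda>x. f x - \<phi> x) = Lp_norm M r f"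
      unfolding Lp_norm_def by (intro arg_cong[where f = "\<lambda>t. t powr (1 / r)"] integral_cong_AE)
        (use SG \<phi>(1) f in \<open>auto simp: test_class_def Lp_def elim!: eventually_mono\<close>)
    with \<phi>(2) show ?thesis
      by simp
  qed
  then show ?thesis
    using Lp_norm_nonneg[of M r f] field_le_epsilon[of "Lp_norm M r f" 0] by simp
qed

section \<open>Hoelder-type bounds on sets of finite measure\<close>

lemma integral_indicator_powr_le_tangent:
  fixes v :: "'a \<Rightarrow> real"
  assumes r: "0 < r" "r \<le> 1" and a: "0 < a" and [measurable]: "v \<in> borel_measurable M" "A \<in> sets M"
    and fin: "emeasure M A < \<infinity>" and nn: "\<And>x. 0 \<le> v x"
    and iv: "integrable M (\<lambda>x. indicator A x * v x)"
  shows "integrable M (\<lambda>x. indicator A x * v x powr r)"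
    and "(\<integral>x. indicator A x * v x powr r \<partial>M)
           \<le> r * a powr (r - 1) * (\<integral>x. indicator A x * v x \<partial>M) + (1 - r) * a powr r * measure M A"
proof -
  define w where "w = (\<lambda>x. r * a powr (r - 1) * (indicator A x * v x) + (1 - r) * a powr r * indicator A x)"
  have tangent: "indicator A x * v x powr r \<le> w x" for x
    using powr_le_tangent_line[OF r nn a] by (simp add: w_def split: split_indicator)
  have w: "integrable M w"
    using iv fin by (simp add: w_def less_top[symmetric])
  have "AE x in M. norm (indicator A x * v x powr r) \<le> norm (w x)"
    using tangent by (intro AE_I2) (auto intro: order.trans[OF _ abs_ge_self])
  then show int: "integrable M (\<lambda>x. indicator A x * v x powr r)"
    by (intro Bochner_Integration.integrable_bound[OF w]) measurable
  show "(\<integral>x. indicator A x * v x powr r \<partial>M)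
      \<le> r * a powr (r - 1) * (\<integral>x. indicator A x * v x \<partial>M) + (1 - r) * a powr r * measure M A"
    using integral_mono[OF int w tangent] iv fin by (simp add: w_def less_top[symmetric])
qed

lemma integral_indicator_powr_eq_0:
  fixes v :: "'a \<Rightarrow> real"
  assumes [measurable]: "v \<in> borel_measurable M" "A \<in> sets M"
    and fin: "emeasure M A < \<infinity>" and nn: "\<And>x. 0 \<le> v x"
    and iv: "integrable M (\<lambda>x. indicator A x * v x)"
    and null: "(\<integral>x. indicator A x * v x \<partial>M) = 0 \<or> measure M A = 0"
  shows "(\<integral>x. indicator A x * v x powr r \<partial>M) = 0"
proof -
  have "AE x in M. indicator A x * v x = 0"
  proof (cases "(\<integral>x. indicator A x * v x \<partial>M) = 0")
    case True
    then show ?thesis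
      using integral_nonneg_eq_0_iff_AE[OF iv] nn by simp
  next
    case False
    with null fin have "emeasure M A = 0"
      by (simp add: emeasure_eq_ennreal_measure less_top[symmetric])
    then have "AE x in M. x \<notin> A"
      by (intro AE_not_in) auto
    then show ?thesis
      by eventually_elim simp
  qed
  then have "AE x in M. indicator A x * v x powr r = 0"
    by eventually_elim (auto split: split_indicator)
  then show ?thesis
    by (simp add: integral_eq_zero_AE)
qed

lemma integral_indicator_powr_le:
  fixes v :: "'a \<Rightarrow> real"
  assumes r: "0 < r" "r \<le> 1" and [measurable]: "v \<in> borel_measurable M" "A \<in> sets M"
    and fin: "emeasure M A < \<infinity>" and nn: "\<And>x. 0 \<le> v x"
    and iv: "integrable M (\<lambda>x. indicator A x * v x)"
  shows "integrable M (\<lambda>x. indicator A x * v x powr r)"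
    and "(\<integral>x. indicator A x * v x powr r \<partial>M)
           \<le> rpow (measure M A) (1 - r) * (\<integral>x. indicator A x * v x \<partial>M) powr r"
proof -
  note tangent = integral_indicator_powr_le_tangent[OF r _ _ _ fin nn iv]
  show "integrable M (\<lambda>x. indicator A x * v x powr r)"
    using tangent(1)[of 1] by simp
  define V \<mu> where "V = (\<integral>x. indicator A x * v x \<partial>M)" and "\<mu> = measure M A"
  have "0 \<le> V" "0 \<le> \<mu>"
    using nn by (auto simp: V_def \<mu>_def intro!: integral_nonneg)
  then consider "r = 1" | "V = 0 \<or> \<mu> = 0" | "r < 1" "0 < V" "0 < \<mu>"
    using r by fastforce
  then show "(\<integral>x. indicator A x * v x powr r \<partial>M) \<le> rpow \<mu> (1 - r) * V powr r"
  proof cases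
    case 1
    then show ?thesis
      using nn by (simp add: rpow_def V_def)
  next
    case 2
    then show ?thesis
      using integral_indicator_powr_eq_0[OF _ _ fin nn iv, of r] \<open>0 \<le> V\<close> \<open>0 \<le> \<mu>\<close>
      by (simp add: V_def \<mu>_def rpow_nonneg)
  next
    case 3
    \<comment> \<open>touch the tangent at the mean value \<open>V / \<mu>\<close>\<close>
    have "r * (V / \<mu>) powr (r - 1) * V + (1 - r) * (V / \<mu>) powr r * \<mu> = \<mu> powr (1 - r) * V powr r"
      using 3 by (simp add: powr_divide powr_diff divide_simps) (simp add: algebra_simps)
    then show ?thesis
      using tangent(2)[of "V / \<mu>"] 3 by (simp add: rpow_def V_def \<mu>_def)
  qed
qed

lemma Lp_norm_le_Lp_norm_2_finite_support:
  assumes p: "0 < p" "p \<le> 2" and A: "A \<in> sets M" "emeasure M A < \<infinity>" and u: "Lp M 2 u"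
    and supp: "\<And>x. x \<notin> A \<Longrightarrow> u x = 0"
  shows "Lp M p u" and "Lp_norm M p u \<le> rpow (measure M A) (1/p - 1/2) * Lp_norm M 2 u"
proof -
  have [measurable]: "u \<in> borel_measurable M" and "integrable M (\<lambda>x. (cmod (u x))\<^sup>2)"
    using u by (simp_all add: Lp_2_iff)
  moreover have sq: "(\<lambda>x. indicator A x * (cmod (u x))\<^sup>2) = (\<lambda>x. (cmod (u x))\<^sup>2)"
    using supp by (auto split: split_indicator)
  ultimately have iA: "integrable M (\<lambda>x. indicator A x * (cmod (u x))\<^sup>2)"
    by (simp add: sq)
  have pw: "cmod (u x) powr p = indicator A x * ((cmod (u x))\<^sup>2) powr (p / 2)" for x
    using supp by (simp add: power2_powr split: split_indicator)
  note jensen = integral_indicator_powr_le[of "p / 2" "\<lambda>x. (cmod (u x))\<^sup>2", OF _ _ _ A _ iA]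
  show "Lp M p u"
    using jensen(1) p by (simp add: Lp_def pw)
  have "(\<integral>x. cmod (u x) powr p \<partial>M)
          \<le> rpow (measure M A) (1 - p/2) * (\<integral>x. (cmod (u x))\<^sup>2 \<partial>M) powr (p/2)"
    using jensen(2) p by (simp add: pw sq)
  then have "Lp_norm M p u
      \<le> rpow (measure M A) (1 - p/2) powr (1/p) * ((\<integral>x. (cmod (u x))\<^sup>2 \<partial>M) powr (p/2)) powr (1/p)"
    unfolding Lp_norm_def using p by (simp add: powr_mono2 flip: powr_mult)
  also have "\<dots> = rpow (measure M A) (1/p - 1/2) * Lp_norm M 2 u"
    using p by (simp add: rpow_powr diff_divide_distrib powr_powr Lp_norm_2 powr_half_sqrt integral_nonneg)
  finally show "Lp_norm M p u \<le> rpow (measure M A) (1/p - 1/2) * Lp_norm M 2 u" .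
qed

lemma Lp_norm_2_indicator_le_bound:
  assumes [measurable]: "A \<in> sets M" "u \<in> borel_measurable M" and A: "emeasure M A < \<infinity>"
    and bound: "AE x in M. x \<in> A \<longrightarrow> cmod (u x) \<le> B"
  shows "Lp_norm M 2 (\<lambda>x. indicator A x * u x) \<le> sqrt (measure M A) * B"
proof (cases "0 \<le> B")
  case True
  have iA: "integrable M (\<lambda>x. B\<^sup>2 * indicator A x :: real)"
    using A by (simp add: less_top[symmetric])
  have ptw: "AE x in M. indicator A x * (cmod (u x))\<^sup>2 \<le> B\<^sup>2 * indicator A x"
    using bound by eventually_elim (auto intro: power_mono split: split_indicator)
  have "integrable M (\<lambda>x. indicator A x * (cmod (u x))\<^sup>2)"
    by (rule Bochner_Integration.integrable_bound[OF iA]) (use ptw in \<open>auto elim!: eventually_mono\<close>)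
  then have "(\<integral>x. indicator A x * (cmod (u x))\<^sup>2 \<partial>M) \<le> B\<^sup>2 * measure M A"
    using integral_mono_AE[OF _ iA ptw] A by (simp add: less_top[symmetric])
  then have "sqrt (\<integral>x. indicator A x * (cmod (u x))\<^sup>2 \<partial>M) \<le> sqrt (B\<^sup>2 * measure M A)"
    by (rule real_sqrt_le_mono)
  also have "\<dots> = sqrt (measure M A) * B"
    using True by (simp add: real_sqrt_mult)
  finally show ?thesis
    by (simp add: Lp_norm_2_indicator)
next
  case False
  from bound have "AE x in M. x \<notin> A"
    by (rule eventually_mono) (use False in \<open>metis norm_ge_zero order.trans\<close>)
  then have "emeasure M A = 0" "AE x in M. indicator A x * u x = 0"
    using AE_iff_measurable[of A M "\<lambda>x. x \<notin> A"] sets.sets_into_space[of A M]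
    by (auto elim!: eventually_mono)
  then show ?thesis
    by (simp add: Lp_norm_2 measure_def integral_eq_zero_AE)
qed

lemma Lp_norm_2_indicator_le_Lr:
  assumes r: "2 \<le> r" and [measurable]: "A \<in> sets M" "u \<in> borel_measurable M"
    and A: "emeasure M A < \<infinity>" and ir: "integrable M (\<lambda>x. indicator A x * cmod (u x) powr r)"
  shows "Lp_norm M 2 (\<lambda>x. indicator A x * u x)
           \<le> rpow (measure M A) (1/2 - 1/r) * (\<integral>x. indicator A x * cmod (u x) powr r \<partial>M) powr (1/r)"
proof -
  define I where "I = (\<integral>x. indicator A x * cmod (u x) powr r \<partial>M)"
  have "(cmod (u x) powr r) powr (2 / r) = (cmod (u x))\<^sup>2" for x
    using r by (simp add: powr_powr)
  then have "(\<integral>x. indicator A x * (cmod (u x))\<^sup>2 \<partial>M) \<le> rpow (measure M A) (1 - 2 / r) * I powr (2 / r)"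
    using integral_indicator_powr_le(2)[of "2 / r" "\<lambda>x. cmod (u x) powr r" M A] r A ir by (simp add: I_def)
  then have "Lp_norm M 2 (\<lambda>x. indicator A x * u x) \<le> sqrt (rpow (measure M A) (1 - 2 / r) * I powr (2 / r))"
    by (simp add: Lp_norm_2_indicator)
  also have "\<dots> = rpow (measure M A) (1/2 - 1/r) * I powr (1/r)"
    by (simp add: real_sqrt_mult rpow_def powr_half_sqrt[symmetric] powr_powr diff_divide_distrib)
  finally show ?thesis
    by (simp add: I_def)
qed

lemma Lp_norm_2_indicator_le_Lq_norm_on:
  assumes q: "2 \<le> q" and [measurable]: "A \<in> sets M" "u \<in> borel_measurable M"
    and A: "emeasure M A < \<infinity>" and Lq: "Lq_norm_on M q A u \<le> ereal L"
  shows "Lp_norm M 2 (\<lambda>x. indicator A x * u x) \<le> rpow (measure M A) (1/2 - inv_exp q) * L"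
proof (cases "q = \<infinity>")
  case True
  have "AE x in restrict_space M A. ereal (cmod (u x)) \<le> esssup (restrict_space M A) (\<lambda>x. ereal (cmod (u x)))"
    by (rule esssup_AE)
  then have "AE x in restrict_space M A. cmod (u x) \<le> L"
    using Lq True by (auto simp: Lq_norm_on_def elim!: eventually_mono dest: order.trans)
  then have "AE x in M. x \<in> A \<longrightarrow> cmod (u x) \<le> L"
    by (simp add: AE_restrict_space_iff)
  from Lp_norm_2_indicator_le_bound[OF _ _ A this] True show ?thesis
    by (simp add: inv_exp_def rpow_def powr_half_sqrt)
next
  case False
  with q obtain r where r: "q = ereal r" "2 \<le> r"
    by (cases q) auto
  define I where "I = (\<integral>\<^sup>+ x. ennreal (indicator A x * cmod (u x) powr r) \<partial>M)"
  have "(\<integral>\<^sup>+ x. indicator A x * ennreal (cmod (u x) powr r) \<partial>M) = I"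
    unfolding I_def by (intro nn_integral_cong) (simp split: split_indicator)
  then have I: "I \<noteq> \<infinity>" "enn2real I powr (1 / r) \<le> L"
    using Lq r by (auto simp: Lq_norm_on_def Let_def split: if_splits)
  then have ir: "integrable M (\<lambda>x. indicator A x * cmod (u x) powr r)"
    by (intro integrableI_nn_integral_finite[where x = "enn2real I"])
      (simp_all add: I_def[symmetric] ennreal_enn2real less_top[symmetric])
  moreover have "(\<integral>x. indicator A x * cmod (u x) powr r \<partial>M) = enn2real I"
    unfolding I_def by (simp add: integral_eq_nn_integral)
  ultimately have "Lp_norm M 2 (\<lambda>x. indicator A x * u x) \<le> rpow (measure M A) (1/2 - 1/r) * enn2real I powr (1/r)"
    using Lp_norm_2_indicator_le_Lr[OF r(2) _ _ A ir] by simp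
  also have "\<dots> \<le> rpow (measure M A) (1/2 - 1/r) * L"
    using I by (intro mult_left_mono) (auto simp: rpow_def)
  finally show ?thesis
    using r by (simp add: inv_exp_def)
qed

lemma integrable_indicator_mult_L2:
  assumes "A \<in> sets M" "emeasure M A < \<infinity>" "Lp M 2 u"
  shows "integrable M (\<lambda>x. indicator A x * u x)"
proof -
  have "Lp M 2 (\<lambda>x. indicator A x * u x)"
    using assms by (intro Lp_indicator) auto
  then show ?thesis
    using Lp_norm_le_Lp_norm_2_finite_support(1)[of 1 A M] assms by (simp add: Lp_1_integrable)
qed

section \<open>The Fourier transform of a unitary pair\<close>

locale unitary_fourier =
  fixes m :: "'g::{topological_group_add, ab_group_add} measure"
    and mh :: "('g \<Rightarrow> complex) measure" and c :: real
  assumes sets_m: "sets m = sets borel" and space_mh: "space mh \<subseteq> dual_group"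
    and unitary: "fourier_unitary c m mh"
begin

lemma c_pos: "0 < c"
  using unitary by (simp add: fourier_unitary_def)

lemma
  assumes "\<xi> \<in> space mh"
  shows measurable_cnj_character: "(\<lambda>x. cnj (\<xi> x)) \<in> borel_measurable m"
    and norm_character: "cmod (\<xi> x) = 1"
proof -
  have "continuous_on UNIV \<xi>" and "\<And>x. cmod (\<xi> x) = 1"
    using assms space_mh by (auto simp: dual_group_def is_character_def)
  then show "cmod (\<xi> x) = 1"
    by simp
  have "continuous_on UNIV (\<lambda>x. cnj (\<xi> x))"
    using \<open>continuous_on UNIV \<xi>\<close> by (intro continuous_intros)
  then show "(\<lambda>x. cnj (\<xi> x)) \<in> borel_measurable m"
    unfolding measurable_cong_sets[OF sets_m refl] by (rule borel_measurable_continuous_onI)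
qed

lemma integrable_mult_cnj_character:
  assumes "integrable m u" "\<xi> \<in> space mh"
  shows "integrable m (\<lambda>x. u x * cnj (\<xi> x))"
  using assms measurable_cnj_character[OF assms(2)]
  by (intro Bochner_Integration.integrable_bound[OF assms(1)]) (auto simp: norm_mult norm_character)

lemma fourier_add:
  "integrable m u \<Longrightarrow> integrable m v \<Longrightarrow> \<xi> \<in> space mh \<Longrightarrow>
    fourier c m (\<lambda>x. u x + v x) \<xi> = fourier c m u \<xi> + fourier c m v \<xi>"
  using integrable_mult_cnj_character[of u \<xi>] integrable_mult_cnj_character[of v \<xi>]
  by (simp add: fourier_def algebra_simps)

lemma fourier_diff:
  "integrable m u \<Longrightarrow> integrable m v \<Longrightarrow> \<xi> \<in> space mh \<Longrightarrow>
    fourier c m (\<lambda>x. u x - v x) \<xi> = fourier c m u \<xi> - fourier c m v \<xi>"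
  using integrable_mult_cnj_character[of u \<xi>] integrable_mult_cnj_character[of v \<xi>]
  by (simp add: fourier_def algebra_simps)

lemma norm_fourier_le: "\<xi> \<in> space mh \<Longrightarrow> cmod (fourier c m u \<xi>) \<le> c * (\<integral>x. cmod (u x) \<partial>m)"
  using integral_norm_bound[of m "\<lambda>x. u x * cnj (\<xi> x)"] c_pos
  by (simp add: fourier_def norm_mult norm_character)

lemma
  assumes "integrable m u" "Lp m 2 u"
  shows Lp_fourier: "Lp mh 2 (fourier c m u)"
    and Lp_norm_fourier: "Lp_norm mh 2 (fourier c m u) = Lp_norm m 2 u"
proof -
  have meas: "fourier c m u \<in> borel_measurable mh"
    and eq: "(\<integral>\<^sup>+ \<xi>. ennreal ((cmod (fourier c m u \<xi>))\<^sup>2) \<partial>mh) = ennreal ((Lp_norm m 2 u)\<^sup>2)"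
    using unitary assms by (auto simp: fourier_unitary_def nn_integral_norm_power2)
  then show L: "Lp mh 2 (fourier c m u)"
    unfolding Lp_2_iff by (auto intro: integrableI_nn_integral_finite)
  from eq show "Lp_norm mh 2 (fourier c m u) = Lp_norm m 2 u"
    by (simp add: nn_integral_norm_power2[OF L] Lp_norm_nonneg)
qed

lemma Lp_norm_fourier_diff:
  assumes "integrable m u" "Lp m 2 u" "integrable m v" "Lp m 2 v"
  shows "Lp_norm mh 2 (\<lambda>\<xi>. fourier c m u \<xi> - fourier c m v \<xi>) = Lp_norm m 2 (\<lambda>x. u x - v x)"
proof -
  have "Lp_norm mh 2 (\<lambda>\<xi>. fourier c m u \<xi> - fourier c m v \<xi>) = Lp_norm mh 2 (fourier c m (\<lambda>x. u x - v x))"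
    using assms by (intro Lp_norm_cong) (simp add: fourier_diff)
  also have "\<dots> = Lp_norm m 2 (\<lambda>x. u x - v x)"
    using assms by (intro Lp_norm_fourier Lp_diff) auto
  finally show ?thesis .
qed

lemma fourier_L2_dist:
  assumes fg: "fourier_L2 c m mh f g" and u: "integrable m u" "Lp m 2 u"
  shows "Lp_norm mh 2 (\<lambda>\<xi>. g \<xi> - fourier c m u \<xi>) = Lp_norm m 2 (\<lambda>x. f x - u x)"
proof -
  obtain F where f: "Lp m 2 f" and g: "Lp mh 2 g"
    and F: "\<And>n. integrable m (F n)" "\<And>n. Lp m 2 (F n)"
    and F_lim: "(\<lambda>n. \<integral>\<^sup>+ x. ennreal ((cmod (F n x - f x))\<^sup>2) \<partial>m) \<longlonglongrightarrow> 0"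
    and G_lim: "(\<lambda>n. \<integral>\<^sup>+ \<xi>. ennreal ((cmod (fourier c m (F n) \<xi> - g \<xi>))\<^sup>2) \<partial>mh) \<longlonglongrightarrow> 0"
    using fg unfolding fourier_L2_def by blast
  have FT: "Lp mh 2 (fourier c m (F n))" "Lp mh 2 (fourier c m u)" for n
    using F u by (simp_all add: Lp_fourier)
  have "(\<lambda>n. Lp_norm m 2 (\<lambda>x. F n x - u x)) \<longlonglongrightarrow> Lp_norm m 2 (\<lambda>x. f x - u x)"
    using F f u F_lim by (intro Lp_norm_diff_tendsto Lp_norm_2_tendsto_0[OF Lp_diff]) auto
  moreover have "(\<lambda>n. Lp_norm mh 2 (\<lambda>\<xi>. fourier c m (F n) \<xi> - fourier c m u \<xi>))
      \<longlonglongrightarrow> Lp_norm mh 2 (\<lambda>\<xi>. g \<xi> - fourier c m u \<xi>)"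
    using FT g G_lim by (intro Lp_norm_diff_tendsto Lp_norm_2_tendsto_0[OF Lp_diff]) auto
  ultimately show ?thesis
    using F u by (simp add: Lp_norm_fourier_diff LIMSEQ_unique)
qed

lemma fourier_L2_norm: "fourier_L2 c m mh f g \<Longrightarrow> Lp_norm mh 2 g = Lp_norm m 2 f"
  using fourier_L2_dist[of f g "\<lambda>_. 0"] by (simp add: fourier_def Lp_def)

lemma Lp_norm_indicator_fourier_le_L1:
  assumes u: "integrable m u" "Lp m 2 u" and [measurable]: "\<Sigma> \<in> sets mh"
    and \<Sigma>: "emeasure mh \<Sigma> < \<infinity>"
  shows "Lp_norm mh 2 (\<lambda>\<xi>. indicator \<Sigma> \<xi> * fourier c m u \<xi>) \<le> sqrt (measure mh \<Sigma>) * (c * (\<integral>x. cmod (u x) \<partial>m))"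
proof (rule Lp_norm_2_indicator_le_bound)
  show "fourier c m u \<in> borel_measurable mh"
    using Lp_fourier[OF u] by (simp add: Lp_2_iff)
  show "AE \<xi> in mh. \<xi> \<in> \<Sigma> \<longrightarrow> cmod (fourier c m u \<xi>) \<le> c * (\<integral>x. cmod (u x) \<partial>m)"
    by (intro AE_I2 impI norm_fourier_le)
qed (use \<Sigma> in auto)

text \<open>Split \<open>\<psi>\<close> into its large values, which have small \<open>L\<^sup>1\<close> norm and hence a uniformly small
  Fourier transform, and its small values, which have small \<open>L\<^sup>2\<close> norm.\<close>

lemma Lp_norm_indicator_fourier_le:
  assumes p: "1 \<le> p" "p \<le> 2" and \<psi>: "integrable m \<psi>" "Lp m 2 \<psi>" "Lp m p \<psi>"
    and [measurable]: "\<Sigma> \<in> sets mh" and \<Sigma>: "emeasure mh \<Sigma> < \<infinity>"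
  shows "Lp_norm mh 2 (\<lambda>\<xi>. indicator \<Sigma> \<xi> * fourier c m \<psi> \<xi>)
           \<le> c * sqrt (measure mh \<Sigma>) * (\<integral>x. cmod (\<psi> x) powr p \<partial>m) + sqrt (\<integral>x. cmod (\<psi> x) powr p \<partial>m)"
proof -
  define \<delta> where "\<delta> = (\<integral>x. cmod (\<psi> x) powr p \<partial>m)"
  define a b where "a x = (if 1 < cmod (\<psi> x) then \<psi> x else 0)" and "b x = \<psi> x - a x" for x
  have [measurable]: "\<psi> \<in> borel_measurable m" "a \<in> borel_measurable m" "b \<in> borel_measurable m"
    using \<psi> unfolding a_def b_def by measurable
  have "cmod (a x) \<le> cmod (\<psi> x)" "cmod (b x) \<le> cmod (\<psi> x)" for x
    by (simp_all add: a_def b_def)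
  then have a: "integrable m a" "Lp m 2 a" and b: "integrable m b" "Lp m 2 b"
    using \<psi> by (auto intro: Lp_mono(1) Bochner_Integration.integrable_bound[of m \<psi>])
  have ip: "integrable m (\<lambda>x. cmod (\<psi> x) powr p)"
    using \<psi> by (simp add: Lp_def)
  have "cmod (a x) \<le> cmod (\<psi> x) powr p" for x
    using p powr_mono[of 1 p "cmod (\<psi> x)"] by (simp add: a_def)
  then have a_L1: "(\<integral>x. cmod (a x) \<partial>m) \<le> \<delta>"
    unfolding \<delta>_def using a by (intro integral_mono[OF _ ip]) auto
  have "(cmod (b x))\<^sup>2 \<le> cmod (\<psi> x) powr p" for x
    using p powr_mono'[of p 2 "cmod (\<psi> x)"] by (simp add: a_def b_def)
  then have b_L2: "Lp_norm m 2 b \<le> sqrt \<delta>"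
    unfolding Lp_norm_2 \<delta>_def using b
    by (intro real_sqrt_le_mono integral_mono[OF _ ip]) (auto simp: Lp_2_iff)
  have "\<psi> = (\<lambda>x. a x + b x)"
    by (simp add: b_def)
  then have "Lp_norm mh 2 (\<lambda>\<xi>. indicator \<Sigma> \<xi> * fourier c m \<psi> \<xi>)
      = Lp_norm mh 2 (\<lambda>\<xi>. indicator \<Sigma> \<xi> * fourier c m a \<xi> + indicator \<Sigma> \<xi> * fourier c m b \<xi>)"
    using a b by (intro Lp_norm_cong) (simp add: fourier_add distrib_left)
  also have "\<dots> \<le> Lp_norm mh 2 (\<lambda>\<xi>. indicator \<Sigma> \<xi> * fourier c m a \<xi>)
      + Lp_norm mh 2 (\<lambda>\<xi>. indicator \<Sigma> \<xi> * fourier c m b \<xi>)"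
    using a b by (intro Lp_norm_triangle Lp_indicator Lp_fourier) auto
  also have "Lp_norm mh 2 (\<lambda>\<xi>. indicator \<Sigma> \<xi> * fourier c m a \<xi>)
      \<le> sqrt (measure mh \<Sigma>) * (c * (\<integral>x. cmod (a x) \<partial>m))"
    using Lp_norm_indicator_fourier_le_L1[OF a _ \<Sigma>] by simp
  also have "\<dots> \<le> sqrt (measure mh \<Sigma>) * (c * \<delta>)"
    using a_L1 c_pos by (intro mult_left_mono) auto
  also have "Lp_norm mh 2 (\<lambda>\<xi>. indicator \<Sigma> \<xi> * fourier c m b \<xi>) \<le> Lp_norm m 2 b"
    using Lp_norm_indicator_le[OF _ _ Lp_fourier[OF b]] by (simp add: Lp_norm_fourier[OF b])
  finally show ?thesis
    using b_L2 by (simp add: \<delta>_def algebra_simps)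
qed

lemma restriction_bound_near_test_function:
  assumes p: "1 \<le> p" "p \<le> 2" and [measurable]: "\<Sigma> \<in> sets mh" and \<Sigma>: "emeasure mh \<Sigma> < \<infinity>"
    and h: "integrable m h" "Lp m 2 h" "Lp m p h"
    and \<phi>: "integrable m \<phi>" "Lp m 2 \<phi>" "Lp m p \<phi>"
    and restr: "Lp_norm mh 2 (\<lambda>\<xi>. indicator \<Sigma> \<xi> * fourier c m \<phi> \<xi>) \<le> K * Lp_norm m p \<phi>"
    and close: "Lp_norm m p (\<lambda>x. h x - \<phi> x) \<le> e" and e: "e \<le> 1"
  shows "Lp_norm mh 2 (\<lambda>\<xi>. indicator \<Sigma> \<xi> * fourier c m h \<xi>)
           \<le> K * Lp_norm m p h + \<bar>K\<bar> * e + c * sqrt (measure mh \<Sigma>) * e + sqrt e"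
proof -
  define \<psi> where "\<psi> = (\<lambda>x. \<phi> x - h x)"
  have \<psi>: "integrable m \<psi>" "Lp m 2 \<psi>" "Lp m p \<psi>"
    using \<phi> h p by (auto simp: \<psi>_def intro: Lp_diff)
  have \<delta>: "(\<integral>x. cmod (\<psi> x) powr p \<partial>m) \<le> e"
    using close e p by (intro integral_powr_le_of_Lp_norm_le) (auto simp: \<psi>_def Lp_norm_minus_commute[of m p h])
  have "Lp_norm mh 2 (\<lambda>\<xi>. indicator \<Sigma> \<xi> * fourier c m h \<xi>)
      = Lp_norm mh 2 (\<lambda>\<xi>. indicator \<Sigma> \<xi> * fourier c m \<phi> \<xi> - indicator \<Sigma> \<xi> * fourier c m \<psi> \<xi>)"
    using \<phi> h by (intro Lp_norm_cong) (simp add: \<psi>_def fourier_diff split: split_indicator)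
  also have "\<dots> \<le> Lp_norm mh 2 (\<lambda>\<xi>. indicator \<Sigma> \<xi> * fourier c m \<phi> \<xi>)
      + Lp_norm mh 2 (\<lambda>\<xi>. indicator \<Sigma> \<xi> * fourier c m \<psi> \<xi>)"
    using \<phi> \<psi> by (intro Lp_norm_diff_le Lp_indicator Lp_fourier) auto
  also have "Lp_norm mh 2 (\<lambda>\<xi>. indicator \<Sigma> \<xi> * fourier c m \<phi> \<xi>) \<le> K * Lp_norm m p h + \<bar>K\<bar> * e"
  proof -
    have "\<bar>Lp_norm m p \<phi> - Lp_norm m p h\<bar> \<le> e"
      using Lp_norm_reverse_triangle[OF p(1) \<phi>(3) h(3)] close
      by (simp add: Lp_norm_minus_commute[of m p \<phi> h])
    with restr show ?thesis
      using mult_le_add_abs_mult[of "Lp_norm m p \<phi>" "Lp_norm m p h" e K] by linarith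
  qed
  also have "Lp_norm mh 2 (\<lambda>\<xi>. indicator \<Sigma> \<xi> * fourier c m \<psi> \<xi>)
      \<le> c * sqrt (measure mh \<Sigma>) * (\<integral>x. cmod (\<psi> x) powr p \<partial>m) + sqrt (\<integral>x. cmod (\<psi> x) powr p \<partial>m)"
    using Lp_norm_indicator_fourier_le[OF p \<psi> _ \<Sigma>] by simp
  also have "\<dots> \<le> c * sqrt (measure mh \<Sigma>) * e + sqrt e"
    using \<delta> c_pos by (intro add_mono mult_left_mono) auto
  finally show ?thesis
    by simp
qed

lemma restriction_bound_extends:
  assumes SG: "test_class c m SG" and p: "1 \<le> p" "p \<le> 2"
    and [measurable]: "\<Sigma> \<in> sets mh" and \<Sigma>: "emeasure mh \<Sigma> < \<infinity>"
    and restr: "\<And>\<phi>. \<phi> \<in> SG \<Longrightarrow> Lp_norm mh 2 (\<lambda>\<xi>. indicator \<Sigma> \<xi> * fourier c m \<phi> \<xi>) \<le> K * Lp_norm m p \<phi>"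
    and h: "integrable m h" "Lp m 2 h" "Lp m p h"
  shows "Lp_norm mh 2 (\<lambda>\<xi>. indicator \<Sigma> \<xi> * fourier c m h \<xi>) \<le> K * Lp_norm m p h"
proof -
  define X B where "X = Lp_norm mh 2 (\<lambda>\<xi>. indicator \<Sigma> \<xi> * fourier c m h \<xi>)"
    and "B = (\<lambda>e. K * Lp_norm m p h + \<bar>K\<bar> * e + c * sqrt (measure mh \<Sigma>) * e + sqrt e)"
  have "X \<le> B e" if e: "0 < e" "e \<le> 1" for e
  proof -
    obtain \<phi> where "\<phi> \<in> SG" and close: "Lp_norm m p (\<lambda>x. h x - \<phi> x) < e"
      using SG h p e unfolding test_class_def by blast
    moreover have "integrable m \<phi>" "Lp m 2 \<phi>" "Lp m p \<phi>"
      using SG \<open>\<phi> \<in> SG\<close> p unfolding test_class_def by auto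
    ultimately show ?thesis
      unfolding X_def B_def using e
      by (intro restriction_bound_near_test_function[OF p _ \<Sigma> h] restr) auto
  qed
  then have "\<forall>\<^sub>F e in at_right 0. X \<le> B e"
    unfolding eventually_at_right_field by (intro exI[of _ 1]) auto
  moreover have "(B \<longlongrightarrow> B 0) (at_right 0)"
    unfolding B_def by (intro tendsto_intros)
  ultimately have "X \<le> B 0"
    by (intro tendsto_lowerbound) auto
  then show ?thesis
    by (simp add: X_def B_def)
qed

lemma Lp_norm_eq_0_of_negative_restriction_bound:
  assumes SG: "test_class c m SG" and p: "1 \<le> p" and K: "K < 0"
    and restr: "\<And>\<phi>. \<phi> \<in> SG \<Longrightarrow> Lp_norm mh 2 (\<lambda>\<xi>. indicator \<Sigma> \<xi> * fourier c m \<phi> \<xi>) \<le> K * Lp_norm m p \<phi>"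
    and f: "Lp m 2 f"
  shows "Lp_norm m 2 f = 0"
proof (rule test_class_Lp_norm_eq_0[OF SG p _ _ f])
  show "Lp_norm m p \<phi> = 0" if "\<phi> \<in> SG" for \<phi>
    using restr[OF that] K Lp_norm_nonneg[of mh 2] Lp_norm_nonneg[of m p \<phi>]
    by (smt (verit) mult_neg_pos)
qed simp

lemma restriction_bound_indicator:
  assumes SG: "test_class c m SG" and p: "1 \<le> p" "p \<le> 2" and K: "0 \<le> K"
    and [measurable]: "S \<in> sets m" "\<Sigma> \<in> sets mh"
    and S: "emeasure m S < \<infinity>" and \<Sigma>: "emeasure mh \<Sigma> < \<infinity>"
    and restr: "\<And>\<phi>. \<phi> \<in> SG \<Longrightarrow> Lp_norm mh 2 (\<lambda>\<xi>. indicator \<Sigma> \<xi> * fourier c m \<phi> \<xi>) \<le> K * Lp_norm m p \<phi>"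
    and f: "Lp m 2 f"
  shows "Lp_norm mh 2 (\<lambda>\<xi>. indicator \<Sigma> \<xi> * fourier c m (\<lambda>x. indicator S x * f x) \<xi>)
           \<le> K * rpow (measure m S) (1/p - 1/2) * Lp_norm m 2 f"
proof -
  define h where "h = (\<lambda>x. indicator S x * f x)"
  have h2: "Lp m 2 h"
    using f by (simp add: h_def Lp_indicator)
  have h_supp: "x \<notin> S \<Longrightarrow> h x = 0" for x
    by (simp add: h_def)
  note holder = Lp_norm_le_Lp_norm_2_finite_support[OF _ p(2) _ S h2 h_supp]
  have "Lp_norm mh 2 (\<lambda>\<xi>. indicator \<Sigma> \<xi> * fourier c m h \<xi>) \<le> K * Lp_norm m p h"
    using holder(1) p integrable_indicator_mult_L2[OF _ S f]
    by (intro restriction_bound_extends[OF SG p _ \<Sigma> restr _ h2]) (auto simp: h_def)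
  also have "\<dots> \<le> K * (rpow (measure m S) (1/p - 1/2) * Lp_norm m 2 h)"
    using holder(2) p K by (intro mult_left_mono) auto
  also have "\<dots> \<le> K * rpow (measure m S) (1/p - 1/2) * Lp_norm m 2 f"
    using Lp_norm_indicator_le[of 2 S m f] f K
    by (simp add: h_def mult.assoc mult_left_mono rpow_nonneg del: mult_le_cancel_left)
  finally show ?thesis
    by (simp add: h_def)
qed

theorem annihilating_pair_bound:
  assumes fg: "fourier_L2 c m mh f g" and SG: "test_class c m SG" and p: "1 \<le> p" "p \<le> 2"
    and [measurable]: "S \<in> sets m" "\<Sigma> \<in> sets mh"
    and S: "emeasure m S < \<infinity>" and \<Sigma>: "emeasure mh \<Sigma> < \<infinity>"
    and restr: "\<And>\<phi>. \<phi> \<in> SG \<Longrightarrow> Lp_norm mh 2 (\<lambda>\<xi>. indicator \<Sigma> \<xi> * fourier c m \<phi> \<xi>) \<le> K * Lp_norm m p \<phi>"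
    and small: "K * rpow (measure m S) (1/p - 1/2) < 1"
  shows "Lp_norm m 2 f \<le> 1 / (1 - K * rpow (measure m S) (1/p - 1/2)) *
           (Lp_norm m 2 (\<lambda>x. indicator (UNIV - S) x * f x)
            + Lp_norm mh 2 (\<lambda>\<xi>. indicator (space mh - \<Sigma>) \<xi> * g \<xi>))"
proof -
  define \<kappa> F G where "\<kappa> = K * rpow (measure m S) (1/p - 1/2)"
    and "F = Lp_norm m 2 (\<lambda>x. indicator (UNIV - S) x * f x)"
    and "G = Lp_norm mh 2 (\<lambda>\<xi>. indicator (space mh - \<Sigma>) \<xi> * g \<xi>)"
  define h where "h = (\<lambda>x. indicator S x * f x)"
  have f: "Lp m 2 f" and g: "Lp mh 2 g"
    using fg by (simp_all add: fourier_L2_def)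
  have "Lp_norm m 2 f \<le> F + G + \<kappa> * Lp_norm m 2 f"
  proof (cases "K < 0")
    case True
    \<comment> \<open>no sign of \<open>K\<close> is assumed; a negative one forces \<open>f = 0\<close>\<close>
    then show ?thesis
      using Lp_norm_eq_0_of_negative_restriction_bound[OF SG p(1) True restr f]
      by (simp add: F_def G_def Lp_norm_nonneg add_nonneg_nonneg)
  next
    case False
    have h: "integrable m h" "Lp m 2 h"
      using f integrable_indicator_mult_L2[OF _ S f] by (simp_all add: h_def Lp_indicator)
    have "Lp_norm mh 2 g = Lp_norm m 2 f"
      by (rule fourier_L2_norm[OF fg])
    moreover have "Lp_norm mh 2 (\<lambda>\<xi>. g \<xi> - fourier c m h \<xi>) = F"
      unfolding fourier_L2_dist[OF fg h] F_def by (intro Lp_norm_cong) (simp add: h_def split: split_indicator)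
    moreover have "Lp_norm mh 2 g \<le> G + Lp_norm mh 2 (\<lambda>\<xi>. indicator \<Sigma> \<xi> * fourier c m h \<xi>)
        + Lp_norm mh 2 (\<lambda>\<xi>. g \<xi> - fourier c m h \<xi>)"
      unfolding G_def using g h by (intro Lp_norm_le_split Lp_fourier) auto
    moreover have "Lp_norm mh 2 (\<lambda>\<xi>. indicator \<Sigma> \<xi> * fourier c m h \<xi>) \<le> \<kappa> * Lp_norm m 2 f"
      unfolding h_def \<kappa>_def using False
      by (intro restriction_bound_indicator[OF SG p _ _ _ S \<Sigma> restr f]) auto
    ultimately show ?thesis
      by simp
  qed
  moreover have "\<kappa> < 1"
    using small by (simp add: \<kappa>_def)
  ultimately show ?thesis
    by (simp add: \<kappa>_def F_def G_def field_simps)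
qed

lemma restriction_estimate_L2:
  assumes SG: "test_class c m SG" and restr: "restriction_estimate c m mh SG p q \<Sigma> \<rho>"
    and q: "2 \<le> q" and \<Sigma>: "\<Sigma> \<in> sets mh" "emeasure mh \<Sigma> < \<infinity>" and \<phi>: "\<phi> \<in> SG"
  shows "Lp_norm mh 2 (\<lambda>\<xi>. indicator \<Sigma> \<xi> * fourier c m \<phi> \<xi>)
           \<le> rpow (measure mh \<Sigma>) (1/2 - inv_exp q) * \<rho> * Lp_norm m p \<phi>"
proof -
  have "Lp mh 2 (fourier c m \<phi>)"
    using SG \<phi> by (intro Lp_fourier) (auto simp: test_class_def)
  then have "fourier c m \<phi> \<in> borel_measurable mh"
    by (simp add: Lp_2_iff)
  from Lp_norm_2_indicator_le_Lq_norm_on[OF q \<Sigma>(1) this \<Sigma>(2)] restr \<phi> show ?thesis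
    by (simp add: restriction_estimate_def mult.assoc)
qed

end

lemma unitary_fourier_of_haar:
  fixes m :: "'g::{topological_group_add, ab_group_add, t2_space} measure"
    and mh :: "('g \<Rightarrow> complex) measure"
  assumes m: "haar_measure (euclidean :: 'g topology) (+) m"
    and mh: "haar_measure (dual_top :: ('g \<Rightarrow> complex) topology) dual_mult mh"
    and c: "fourier_unitary c m mh"
  shows "unitary_fourier m mh c"
proof
  have "{U. openin (euclidean :: 'g topology) U} = {U. open U}"
    by simp
  then show "sets m = sets borel"
    using m by (simp add: haar_measure_def borel_sets_of_def sets_borel)
  show "space mh \<subseteq> dual_group"
    using mh by (auto simp: haar_measure_def dual_top_def)
qed (rule c)

theorem theorem2p1:
  fixes m :: "'g::{topological_group_add, ab_group_add, t2_space} measure"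
    and mh :: "('g \<Rightarrow> complex) measure"
    and c :: real and SG :: "('g \<Rightarrow> complex) set"
    and p :: real and q :: ereal and \<rho> :: real
    and S :: "'g set" and \<Sigma> :: "('g \<Rightarrow> complex) set"
  assumes G: "lca_group TYPE('g)"
    and m: "haar_measure (euclidean :: 'g topology) (+) m"
    and mh: "haar_measure (dual_top :: ('g \<Rightarrow> complex) topology) dual_mult mh"
    and c: "fourier_unitary c m mh"
    and SG: "test_class c m SG"
    and pq: "1 \<le> p" "p \<le> 2" "2 \<le> q"
    and S: "S \<in> sets m" "emeasure m S < \<infinity>"
    and \<Sigma>: "\<Sigma> \<in> sets mh" "emeasure mh \<Sigma> < \<infinity>"
    and restr: "restriction_estimate c m mh SG p q \<Sigma> \<rho>"
    and small: "\<rho> * rpow (measure m S) (1/p - 1/2) * rpow (measure mh \<Sigma>) (1/2 - inv_exp q) < 1"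
  shows "\<forall>f g. fourier_L2 c m mh f g \<longrightarrow>
    sqrt (\<integral>x. (cmod (f x))\<^sup>2 \<partial>m) \<le>
      (1 / (1 - \<rho> * rpow (measure m S) (1/p - 1/2) * rpow (measure mh \<Sigma>) (1/2 - inv_exp q))) *
      (sqrt (\<integral>x. indicator (UNIV - S) x * (cmod (f x))\<^sup>2 \<partial>m) +
       sqrt (\<integral>\<xi>. indicator (space mh - \<Sigma>) \<xi> * (cmod (g \<xi>))\<^sup>2 \<partial>mh))"
proof (intro allI impI)
  interpret unitary_fourier m mh c
    using m mh c by (rule unitary_fourier_of_haar)
  fix f g
  assume "fourier_L2 c m mh f g"
  note bound = annihilating_pair_bound[OF this SG pq(1,2) S(1) \<Sigma>(1) S(2) \<Sigma>(2)
      restriction_estimate_L2[OF SG restr pq(3) \<Sigma>]]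
  from bound[unfolded Lp_norm_2_indicator, unfolded Lp_norm_2] small
  show "sqrt (\<integral>x. (cmod (f x))\<^sup>2 \<partial>m) \<le>
      (1 / (1 - \<rho> * rpow (measure m S) (1/p - 1/2) * rpow (measure mh \<Sigma>) (1/2 - inv_exp q))) *
      (sqrt (\<integral>x. indicator (UNIV - S) x * (cmod (f x))\<^sup>2 \<partial>m) +
       sqrt (\<integral>\<xi>. indicator (space mh - \<Sigma>) \<xi> * (cmod (g \<xi>))\<^sup>2 \<partial>mh))"
    by (simp add: ac_simps)
qed

end
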